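(* Let $d\ge1$, $q\in(0,\infty]$ and let $U(q,x)$ be as defined in the context. There exists $C_4=C_4(d,q)\in(0,\infty)$ such that for all $x\ge1$ $$U(q,x)\ge \exp\big(-C_4\,x^{\min(q,2)/d}\big).$$
   Context: For $x>0$ and a random variable $\tau$, $T(\tau,x)=\max(\mathbf P(\tau>x),\mathbf P(\tau<-x))$. Let $\{\xi(i,m): i\ge1,\ 1\le m\le d\}$ be mutually independent centered random variables. Let $\mathcal K_d$ be the set of vectors $k\in\{0,1,\dots,d\}^d$ with $\sum_l k(l)=d$; for $k\in\mathcal K_d$ let $l_1<\dots<l_s$ be the indices with $k(l)>0$. A centered polynomial of degree $d$ with diagonal members is $$R_d=\sum_{k\in\mathcal K_d}\ \sum_{1\le j_1<\dots<j_s\le n} b_k(j_1,\dots,j_s)\prod_{r=1}^s\Big(\xi(j_r,l_r)^{k(l_r)}-\mathbf E\,\xi(j_r,l_r)^{k(l_r)}\Big),$$ with $\sum_{k}\sum_j b_k(j)^2=1$. $U(q,x)$ is the supremum of $T(R_d,x)$ over all $n\ge1$, all such normalized coefficients, and all totally independent centered families $\{\xi(i,m)\}$ with $T(\xi(i,m),x)\le \exp(-x^q)$ for all $x\ge0$ and all $i,m$. *)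

theory Defs
  imports "HOL-Probability.Probability"
begin

definition Tfun :: "'a measure \<Rightarrow> ('a \<Rightarrow> real) \<Rightarrow> real \<Rightarrow> real" where
  "Tfun M tau x = max (measure M {w \<in> space M. tau w > x}) (measure M {w \<in> space M. tau w < - x})"

text \<open>The tail bound exp(-x^q), with q in (0,infinity]; for q = infinity we use the
  convention x^infinity = 0 (x<1), 1 (x=1), infinity (x>1), exp(-infinity) = 0.\<close>
definition tail_bound :: "ereal \<Rightarrow> real \<Rightarrow> real" where
  "tail_bound q x = (if q = \<infinity> then (if x < 1 then 1 else if x = 1 then exp (-1) else 0)
                     else exp (- (x powr real_of_ereal q)))"

definition Kset :: "nat \<Rightarrow> (nat \<Rightarrow> nat) set" where
  "Kset d = {k. (\<forall>l. l \<notin> {1..d} \<longrightarrow> k l = 0) \<and> (\<forall>l. k l \<le> d) \<and> (\<Sum>l\<in>{1..d}. k l) = d}"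

definition supp_list :: "nat \<Rightarrow> (nat \<Rightarrow> nat) \<Rightarrow> nat list" where
  "supp_list d k = sorted_list_of_set {l \<in> {1..d}. k l > 0}"

definition Jset :: "nat \<Rightarrow> nat \<Rightarrow> nat list set" where
  "Jset n s = {js. length js = s \<and> sorted_wrt (<) js \<and> set js \<subseteq> {1..n}}"

definition Rpoly :: "'a measure \<Rightarrow> nat \<Rightarrow> nat \<Rightarrow> ((nat \<Rightarrow> nat) \<Rightarrow> nat list \<Rightarrow> real)
     \<Rightarrow> (nat \<Rightarrow> nat \<Rightarrow> 'a \<Rightarrow> real) \<Rightarrow> 'a \<Rightarrow> real" where
  "Rpoly M d n b xi w =
     (\<Sum>k\<in>Kset d. let L = supp_list d k in
        \<Sum>js\<in>Jset n (length L). b k js *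
          (\<Prod>r<length L. (xi (js ! r) (L ! r) w) ^ k (L ! r)
                          - integral\<^sup>L M (\<lambda>v. (xi (js ! r) (L ! r) v) ^ k (L ! r))))"

text \<open>The sample space type is fixed to nat => real, on which
  every such (countable) family can be realized.\<close>
definition admissible :: "nat \<Rightarrow> ereal \<Rightarrow> (nat \<Rightarrow> real) measure \<Rightarrow> nat
     \<Rightarrow> ((nat \<Rightarrow> nat) \<Rightarrow> nat list \<Rightarrow> real) \<Rightarrow> (nat \<Rightarrow> nat \<Rightarrow> (nat \<Rightarrow> real) \<Rightarrow> real) \<Rightarrow> bool" where
  "admissible d q M n b xi \<longleftrightarrow>
     prob_space M \<and> n \<ge> 1 \<and>
     (\<Sum>k\<in>Kset d. \<Sum>js\<in>Jset n (length (supp_list d k)). (b k js)\<^sup>2) = 1 \<and>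
     prob_space.indep_vars M (\<lambda>_. borel) (\<lambda>(i, m). xi i m) ({1..} \<times> {1..d}) \<and>
     (\<forall>i\<ge>1. \<forall>m\<in>{1..d}.
        integrable M (xi i m) \<and> integral\<^sup>L M (xi i m) = 0 \<and>
        (\<forall>x\<ge>0. Tfun M (xi i m) x \<le> tail_bound q x))"

definition U :: "nat \<Rightarrow> ereal \<Rightarrow> real \<Rightarrow> real" where
  "U d q x = Sup {Tfun M (Rpoly M d n b xi) x | M n b xi. admissible d q M n b xi}"

end

theory Submission
  imports Defs
begin

(* The lower bound is witnessed by the multilinear part of R_d: all exponents equal one and
   b = binom(n,d)^(-1/2) on every index tuple j_1 < ... < j_d.  The variables are independent,
   symmetric and take the values t, -t with probability p each.  On the event that all n d
   of them equal t, which has probability p^(n d), one gets R_d = sqrt(binom(n,d)) t^d.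
   For n = d and t = (2x)^(1/d) the tail condition allows p of order exp(-t^q), so the
   probability is exp(-O(x^(q/d))).  For t = 1 and p = e^(-2), any q is allowed, and
   n of order d x^(2/d) gives binom(n,d) >= (n/d)^d > x^2, so the probability is
   exp(-O(x^(2/d))). *)

section \<open>Symmetric three-point laws\<close>

definition three_point_pmf :: "real \<Rightarrow> real \<Rightarrow> real pmf" where
  "three_point_pmf t p = pmf_of_list [(t, p), (-t, p), (0, 1 - 2 * p)]"

lemma three_point_pmf_wf:
  fixes t p :: real
  assumes "0 \<le> p" "p \<le> 1/2"
  shows "pmf_of_list_wf [(t, p), (-t, p), (0, 1 - 2 * p)]"
  using assms by (auto simp: pmf_of_list_wf_def)

lemma set_three_point_pmf: "0 \<le> p \<Longrightarrow> p \<le> 1/2 \<Longrightarrow> set_pmf (three_point_pmf t p) \<subseteq> {t, -t, 0}"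
  unfolding three_point_pmf_def using set_pmf_of_list[OF three_point_pmf_wf] by auto

lemma measure_three_point_pmf:
  "0 \<le> p \<Longrightarrow> p \<le> 1/2 \<Longrightarrow> measure (three_point_pmf t p) S =
     (if t \<in> S then p else 0) + (if -t \<in> S then p else 0) + (if 0 \<in> S then 1 - 2 * p else 0)"
  unfolding three_point_pmf_def by (subst measure_pmf_of_list[OF three_point_pmf_wf]) auto

lemma expectation_three_point_pmf:
  assumes "t > 0" "0 \<le> p" "p \<le> 1/2"
  shows "measure_pmf.expectation (three_point_pmf t p) (\<lambda>v. v) = 0"
proof -
  have "measure_pmf.expectation (three_point_pmf t p) (\<lambda>v. v)
      = (\<Sum>v\<in>{t, -t}. v * pmf (three_point_pmf t p) v)"
    using set_three_point_pmf[OF assms(2,3)] by (intro integral_measure_pmf_real) auto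
  also have "\<dots> = 0"
    using assms by (simp add: three_point_pmf_def pmf_pmf_of_list[OF three_point_pmf_wf])
  finally show ?thesis .
qed

lemma Tfun_three_point_pmf:
  assumes "t > 0" "0 \<le> p" "p \<le> 1/2" "y \<ge> 0"
  shows "Tfun (three_point_pmf t p) (\<lambda>v. v) y = (if y < t then p else 0)"
  using assms by (simp add: Tfun_def measure_three_point_pmf)

lemma Tfun_map_pmf: "Tfun (map_pmf f P) (\<lambda>v. v) y = Tfun P f y"
  by (simp add: Tfun_def vimage_def)

section \<open>Independence of reindexed families\<close>

lemma (in prob_space) indep_vars_reindex:
  assumes inj: "inj_on g J" and ind: "indep_vars M' Y (g ` J)"
  shows "indep_vars (\<lambda>j. M' (g j)) (\<lambda>j. Y (g j)) J"
proof -
  from ind have rv: "\<forall>i\<in>g ` J. random_variable (M' i) (Y i)"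
    and isd: "indep_sets (\<lambda>i. {Y i -` A \<inter> space M | A. A \<in> sets (M' i)}) (g ` J)"
    unfolding indep_vars_def2 by auto
  show ?thesis unfolding indep_vars_def2
  proof (intro conjI ballI indep_setsI)
    fix j assume "j \<in> J"
    then show "random_variable (M' (g j)) (Y (g j))"
      and "{Y (g j) -` A \<inter> space M |A. A \<in> sets (M' (g j))} \<subseteq> events"
      using rv by (auto intro: measurable_sets)
  next
    fix A K
    assume K: "K \<noteq> {}" "K \<subseteq> J" "finite K"
      and A: "\<forall>j\<in>K. A j \<in> {Y (g j) -` A \<inter> space M |A. A \<in> sets (M' (g j))}"
    define A' where "A' = A \<circ> inv_into J g"
    have inv: "inv_into J g (g j) = j" if "j \<in> K" for j
      using inj K that by (auto intro: inv_into_f_f)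
    have "prob (\<Inter>a\<in>g ` K. A' a) = (\<Prod>a\<in>g ` K. prob (A' a))"
      using K A inv by (intro indep_setsD[OF isd]) (auto simp: A'_def)
    moreover have "(\<Inter>a\<in>g ` K. A' a) = (\<Inter>j\<in>K. A j)"
      using inv by (auto simp: A'_def)
    moreover have "(\<Prod>a\<in>g ` K. prob (A' a)) = (\<Prod>j\<in>K. prob (A j))"
      using inv K inj by (subst prod.reindex) (auto simp: A'_def intro: inj_on_subset)
    ultimately show "prob (\<Inter>j\<in>K. A j) = (\<Prod>j\<in>K. prob (A j))"
      by simp
  qed
qed

lemma (in prob_space) indep_sets_extend_trivial:
  assumes ind: "indep_sets F J" and "J \<subseteq> I"
    and trivial: "\<And>i. i \<in> I - J \<Longrightarrow> F i \<subseteq> {{}, space M}"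
  shows "indep_sets F I"
proof (rule indep_setsI)
  have F_events: "F i \<subseteq> events" if "i \<in> I" for i
    using ind trivial that by (cases "i \<in> J") (auto simp: indep_sets_def)
  show "F i \<subseteq> events" if "i \<in> I" for i
    by (rule F_events[OF that])
  fix A K assume K: "K \<noteq> {}" "K \<subseteq> I" "finite K" and A: "\<forall>j\<in>K. A j \<in> F j"
  have A_space: "A j \<subseteq> space M" if "j \<in> K" for j
    using F_events A K that sets.sets_into_space by blast
  show "prob (\<Inter>j\<in>K. A j) = (\<Prod>j\<in>K. prob (A j))"
  proof (cases "\<exists>j\<in>K - J. A j = {}")
    case True
    then obtain j where j: "j \<in> K" "A j = {}" by blast
    then have "(\<Inter>j\<in>K. A j) = {}" by blast
    moreover have "(\<Prod>j\<in>K. prob (A j)) = 0"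
      using j K(3) by (intro prod_zero) (auto intro: bexI[of _ j])
    ultimately show ?thesis by simp
  next
    case False
    then have full: "A j = space M" if "j \<in> K - J" for j
      using A trivial K(2) that by blast
    have "(\<Prod>j\<in>K. prob (A j)) = (\<Prod>j\<in>K \<inter> J. prob (A j))"
      using K full by (intro prod.mono_neutral_right) (auto simp: prob_space)
    moreover have "prob (\<Inter>j\<in>K. A j) = (\<Prod>j\<in>K \<inter> J. prob (A j))"
    proof (cases "K \<inter> J = {}")
      case True
      then have "(\<Inter>j\<in>K. A j) = space M"
        using full K(1) by auto
      with True show ?thesis by (simp add: prob_space)
    next
      case False
      then have "(\<Inter>j\<in>K. A j) = (\<Inter>j\<in>K \<inter> J. A j)"
        using full A_space by blast
      also have "prob \<dots> = (\<Prod>j\<in>K \<inter> J. prob (A j))"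
        using K A False by (intro indep_setsD[OF ind]) auto
      finally show ?thesis .
    qed
    ultimately show ?thesis by simp
  qed
qed

lemma (in prob_space) indep_vars_extend_const:
  assumes ind: "indep_vars M' X J" and "J \<subseteq> I"
    and const: "\<And>i. i \<in> I - J \<Longrightarrow> \<exists>c. \<forall>w\<in>space M. X i w = c"
    and rv: "\<And>i. i \<in> I \<Longrightarrow> random_variable (M' i) (X i)"
  shows "indep_vars M' X I"
  unfolding indep_vars_def2
proof (intro conjI ballI rv)
  show "indep_sets (\<lambda>i. {X i -` A \<inter> space M |A. A \<in> sets (M' i)}) I"
  proof (rule indep_sets_extend_trivial)
    show "indep_sets (\<lambda>i. {X i -` A \<inter> space M |A. A \<in> sets (M' i)}) J"
      using ind unfolding indep_vars_def2 by blast
    fix i assume "i \<in> I - J"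
    then obtain c where "\<forall>w\<in>space M. X i w = c" using const by blast
    then show "{X i -` A \<inter> space M |A. A \<in> sets (M' i)} \<subseteq> {{}, space M}"
      by auto
  qed fact
qed

section \<open>The multilinear part of R_d\<close>

lemma finite_Kset: "finite (Kset d)"
proof -
  have "inj_on (\<lambda>k. restrict k {1..d}) (Kset d)"
    unfolding inj_on_def Kset_def by (auto simp: fun_eq_iff restrict_def) metis
  moreover have "(\<lambda>k. restrict k {1..d}) ` Kset d \<subseteq> PiE {1..d} (\<lambda>_. {0..d})"
    unfolding Kset_def by auto
  ultimately show ?thesis
    by (meson finite_PiE finite_atLeastAtMost finite_imageD finite_subset)
qed

lemma Jset_eq_sorted_subsets: "Jset n s = sorted_list_of_set ` {S. S \<subseteq> {1..n} \<and> card S = s}"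
proof (intro equalityI subsetI)
  fix js assume "js \<in> Jset n s"
  then have js: "length js = s" "sorted_wrt (<) js" "set js \<subseteq> {1..n}"
    unfolding Jset_def by auto
  then have "distinct js" "sorted js" using strict_sorted_iff by auto
  then have "js = sorted_list_of_set (set js)" and "card (set js) = s"
    using js(1) by (simp_all add: sorted_list_of_set.idem_if_sorted_distinct distinct_card)
  with js(3) show "js \<in> sorted_list_of_set ` {S. S \<subseteq> {1..n} \<and> card S = s}" by blast
next
  fix js assume "js \<in> sorted_list_of_set ` {S. S \<subseteq> {1..n} \<and> card S = s}"
  then obtain S where S: "S \<subseteq> {1..n}" "card S = s" "js = sorted_list_of_set S" by auto
  then have "finite S" using finite_subset by blast
  with S show "js \<in> Jset n s" unfolding Jset_def by auto
qed

lemma card_Jset: "card (Jset n s) = n choose s"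
proof -
  have "inj_on sorted_list_of_set {S. S \<subseteq> {1..n} \<and> card S = s}"
    by (rule inj_onI) (metis (mono_tags) finite_atLeastAtMost mem_Collect_eq rev_finite_subset
        sorted_list_of_set.set_sorted_key_list_of_set)
  then have "card (Jset n s) = card {S. S \<subseteq> {1..n} \<and> card S = s}"
    unfolding Jset_eq_sorted_subsets by (rule card_image)
  also have "\<dots> = n choose s" using n_subsets[of "{1..n}" s] by simp
  finally show ?thesis .
qed

definition multilinear_index :: "nat \<Rightarrow> nat \<Rightarrow> nat" where
  "multilinear_index d l = (if l \<in> {1..d} then 1 else 0)"

lemma multilinear_index_in_Kset: "d \<ge> 1 \<Longrightarrow> multilinear_index d \<in> Kset d"
  unfolding Kset_def multilinear_index_def by auto

lemma supp_list_multilinear_index: "supp_list d (multilinear_index d) = [1..<Suc d]"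
proof -
  have "{l \<in> {1..d}. multilinear_index d l > 0} = {1..<Suc d}"
    unfolding multilinear_index_def by auto
  then show ?thesis unfolding supp_list_def by simp
qed

definition multilinear_coeffs :: "nat \<Rightarrow> nat \<Rightarrow> (nat \<Rightarrow> nat) \<Rightarrow> nat list \<Rightarrow> real" where
  "multilinear_coeffs n d k js =
     (if k = multilinear_index d \<and> js \<in> Jset n d then 1 / sqrt (n choose d) else 0)"

lemma sum_Kset_eq_multilinear_index_term:
  assumes "d \<ge> 1"
    and "\<And>k. k \<in> Kset d \<Longrightarrow> k \<noteq> multilinear_index d \<Longrightarrow> f k = 0"
  shows "(\<Sum>k\<in>Kset d. f k) = f (multilinear_index d)"
  using assms finite_Kset multilinear_index_in_Kset[OF assms(1)]
  by (subst sum.remove) (auto intro: sum.neutral)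

lemma multilinear_coeffs_normalized:
  assumes "d \<ge> 1" "d \<le> n"
  shows "(\<Sum>k\<in>Kset d. \<Sum>js\<in>Jset n (length (supp_list d k)). (multilinear_coeffs n d k js)\<^sup>2) = 1"
proof -
  have "(\<Sum>k\<in>Kset d. \<Sum>js\<in>Jset n (length (supp_list d k)). (multilinear_coeffs n d k js)\<^sup>2)
      = (\<Sum>js\<in>Jset n d. (1 / sqrt (n choose d))\<^sup>2)"
    using assms(1) by (subst sum_Kset_eq_multilinear_index_term)
      (auto simp: multilinear_coeffs_def supp_list_multilinear_index)
  also have "\<dots> = 1"
    using assms(2) by (simp add: card_Jset power_divide)
  finally show ?thesis .
qed

lemma Rpoly_multilinear_coeffs:
  assumes "d \<ge> 1" and centered: "\<And>i m. integral\<^sup>L M (xi i m) = 0"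
  shows "Rpoly M d n (multilinear_coeffs n d) xi w =
           (\<Sum>js\<in>Jset n d. \<Prod>r<d. xi (js ! r) (Suc r) w) / sqrt (n choose d)"
proof -
  have L: "[1..<Suc d] ! r = Suc r" and k: "multilinear_index d (Suc r) = 1" if "r < d" for r
    using that by (simp_all add: nth_upt multilinear_index_def del: upt_Suc)
  have "Rpoly M d n (multilinear_coeffs n d) xi w =
      (\<Sum>js\<in>Jset n d. (\<Prod>r<d. xi (js ! r) (Suc r) w) / sqrt (n choose d))"
    unfolding Rpoly_def using assms(1)
    by (subst sum_Kset_eq_multilinear_index_term)
      (auto simp: multilinear_coeffs_def supp_list_multilinear_index Let_def L k centered
        simp del: upt_Suc intro!: sum.cong prod.cong)
  then show ?thesis by (simp add: sum_divide_distrib)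
qed

section \<open>The three-point model\<close>

lemma Tfun_le_U:
  assumes "admissible d q M n b xi"
  shows "Tfun M (Rpoly M d n b xi) x \<le> U d q x"
  unfolding U_def
proof (rule cSup_upper)
  show "Tfun M (Rpoly M d n b xi) x \<in> {Tfun M (Rpoly M d n b xi) x | M n b xi. admissible d q M n b xi}"
    using assms by blast
  show "bdd_above {Tfun M (Rpoly M d n b xi) x | M n b xi. admissible d q M n b xi}"
    by (rule bdd_aboveI[of _ 1])
      (auto simp: admissible_def Tfun_def prob_space.prob_le_1)
qed

definition three_point_model :: "nat \<Rightarrow> nat \<Rightarrow> real \<Rightarrow> real \<Rightarrow> (nat \<Rightarrow> real) pmf" where
  "three_point_model n d t p = Pi_pmf (prod_encode ` ({1..n} \<times> {1..d})) 0 (\<lambda>_. three_point_pmf t p)"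

definition coordinate_family :: "nat \<Rightarrow> nat \<Rightarrow> nat \<Rightarrow> nat \<Rightarrow> (nat \<Rightarrow> real) \<Rightarrow> real" where
  "coordinate_family n d i m w = (if (i, m) \<in> {1..n} \<times> {1..d} then w (prod_encode (i, m)) else 0)"

lemma indep_coordinate_family:
  "prob_space.indep_vars (three_point_model n d t p) (\<lambda>_. borel)
     (\<lambda>(i, m). coordinate_family n d i m) ({1..} \<times> {1..d})"
proof -
  define G where "G = {1..n} \<times> {(1::nat)..d}"
  have coordinates: "prob_space.indep_vars (three_point_model n d t p) (\<lambda>_. count_space UNIV)
      (\<lambda>a w. w a) (prod_encode ` G)"
    unfolding three_point_model_def G_def by (rule indep_vars_Pi_pmf) simp
  from coordinates have "prob_space.indep_vars (three_point_model n d t p) (\<lambda>_. borel)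
      (\<lambda>a w. w a) (prod_encode ` G)"
    by (rule prob_space.indep_vars_compose2[OF measure_pmf.prob_space_axioms,
          where Y = "\<lambda>_. id", simplified]) simp
  then have "prob_space.indep_vars (three_point_model n d t p) (\<lambda>_. borel)
      (\<lambda>j w. w (prod_encode j)) G"
    using measure_pmf.indep_vars_reindex[where g = prod_encode and J = G]
    by (simp add: inj_prod_encode)
  then have "prob_space.indep_vars (three_point_model n d t p) (\<lambda>_. borel)
      (\<lambda>(i, m). coordinate_family n d i m) G"
    by (rule prob_space.indep_vars_cong[OF measure_pmf.prob_space_axioms, THEN iffD1, rotated 3])
      (auto simp: G_def coordinate_family_def)
  then show ?thesis
    by (rule measure_pmf.indep_vars_extend_const) (auto simp: G_def coordinate_family_def)
qed

lemma map_pmf_coordinate_family: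
  assumes "(i, m) \<in> {1..n} \<times> {1..d}"
  shows "map_pmf (coordinate_family n d i m) (three_point_model n d t p) = three_point_pmf t p"
proof -
  have "coordinate_family n d i m = (\<lambda>w. w (prod_encode (i, m)))"
    using assms by (auto simp: coordinate_family_def)
  then show ?thesis
    using assms by (simp add: three_point_model_def Pi_pmf_component)
qed

context
  fixes n d :: nat and t p :: real
  assumes t: "t > 0" and p: "0 \<le> p" "p \<le> 1/2"
begin

lemma expectation_coordinate_family:
  "measure_pmf.expectation (three_point_model n d t p) (coordinate_family n d i m) = 0"
proof (cases "(i, m) \<in> {1..n} \<times> {1..d}")
  case True
  have "measure_pmf.expectation (three_point_model n d t p) (coordinate_family n d i m)
      = measure_pmf.expectation (map_pmf (coordinate_family n d i m) (three_point_model n d t p))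
          (\<lambda>v. v)"
    by simp
  also have "\<dots> = 0"
    using True t p by (simp add: map_pmf_coordinate_family expectation_three_point_pmf)
  finally show ?thesis .
next
  case False
  then have "coordinate_family n d i m = (\<lambda>_. 0)"
    by (auto simp: coordinate_family_def)
  then show ?thesis by simp
qed

lemma Tfun_coordinate_family:
  assumes "y \<ge> 0"
  shows "Tfun (three_point_model n d t p) (coordinate_family n d i m) y \<le> (if y < t then p else 0)"
proof (cases "(i, m) \<in> {1..n} \<times> {1..d}")
  case True
  have "Tfun (three_point_model n d t p) (coordinate_family n d i m) y
      = Tfun (map_pmf (coordinate_family n d i m) (three_point_model n d t p)) (\<lambda>v. v) y"
    by (rule Tfun_map_pmf[symmetric])
  also have "\<dots> = (if y < t then p else 0)"
    using True assms t p by (simp add: map_pmf_coordinate_family Tfun_three_point_pmf)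
  finally show ?thesis by simp
qed (use assms p in \<open>simp add: Tfun_def coordinate_family_def\<close>)

lemma finite_set_three_point_model: "finite (set_pmf (three_point_model n d t p))"
proof -
  from set_three_point_pmf[OF p] show ?thesis
    unfolding three_point_model_def
    by (subst set_Pi_pmf) (auto intro: finite_subset)
qed

lemma admissible_three_point_model:
  assumes "d \<ge> 1" "d \<le> n" and tail: "\<And>y. 0 \<le> y \<Longrightarrow> y < t \<Longrightarrow> p \<le> tail_bound q y"
  shows "admissible d q (three_point_model n d t p) n (multilinear_coeffs n d) (coordinate_family n d)"
  unfolding admissible_def
proof (intro conjI allI impI ballI)
  show "prob_space (three_point_model n d t p)" by (rule measure_pmf.prob_space_axioms)
  show "1 \<le> n" using assms by simp
  show "(\<Sum>k\<in>Kset d. \<Sum>js\<in>Jset n (length (supp_list d k)). (multilinear_coeffs n d k js)\<^sup>2) = 1"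
    using assms(1,2) by (rule multilinear_coeffs_normalized)
  show "prob_space.indep_vars (three_point_model n d t p) (\<lambda>_. borel)
      (\<lambda>(i, m). coordinate_family n d i m) ({1..} \<times> {1..d})"
    by (rule indep_coordinate_family)
  fix i m :: nat
  show "integrable (three_point_model n d t p) (coordinate_family n d i m)"
    by (intro integrable_measure_pmf_finite finite_set_three_point_model)
  show "measure_pmf.expectation (three_point_model n d t p) (coordinate_family n d i m) = 0"
    by (rule expectation_coordinate_family)
  fix y :: real assume "0 \<le> y"
  have "0 \<le> tail_bound q y" by (simp add: tail_bound_def)
  then show "Tfun (three_point_model n d t p) (coordinate_family n d i m) y \<le> tail_bound q y"
    using Tfun_coordinate_family[OF \<open>0 \<le> y\<close>, of i m] tail[OF \<open>0 \<le> y\<close>]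
    by (auto split: if_splits)
qed

lemma prob_three_point_model_all_t:
  "measure_pmf.prob (three_point_model n d t p) (Pi (prod_encode ` ({1..n} \<times> {1..d})) (\<lambda>_. {t}))
     = p ^ (n * d)"
proof -
  have "card (prod_encode ` ({1..n} \<times> {1..d})) = n * d"
    by (subst card_image) (auto simp: inj_prod_encode)
  then show ?thesis
    using t p by (simp add: three_point_model_def measure_Pi_pmf_Pi measure_three_point_pmf)
qed

lemma Rpoly_three_point_model_all_t:
  assumes "d \<ge> 1" and w: "w \<in> Pi (prod_encode ` ({1..n} \<times> {1..d})) (\<lambda>_. {t})"
  shows "Rpoly (three_point_model n d t p) d n (multilinear_coeffs n d) (coordinate_family n d) w
      = sqrt (n choose d) * t ^ d"
proof -
  have "(\<Prod>r<d. coordinate_family n d (js ! r) (Suc r) w) = t ^ d" if "js \<in> Jset n d" for js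
  proof -
    have "js ! r \<in> {1..n}" if "r < d" for r
      using \<open>js \<in> Jset n d\<close> that nth_mem[of r js] by (auto simp: Jset_def subset_iff)
    then have "coordinate_family n d (js ! r) (Suc r) w = t" if "r < d" for r
      using w that by (auto simp: coordinate_family_def)
    then have "(\<Prod>r<d. coordinate_family n d (js ! r) (Suc r) w) = (\<Prod>r<d. t)"
      by (intro prod.cong) auto
    then show ?thesis by simp
  qed
  then have "(\<Sum>js\<in>Jset n d. \<Prod>r<d. coordinate_family n d (js ! r) (Suc r) w) = (n choose d) * t ^ d"
    by (simp add: card_Jset)
  moreover have "real (n choose d) * t ^ d / sqrt (n choose d) = sqrt (n choose d) * t ^ d"
  proof -
    have "real (n choose d) * t ^ d / sqrt (n choose d) = (n choose d) / sqrt (n choose d) * t ^ d"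
      by simp
    also have "\<dots> = sqrt (n choose d) * t ^ d"
      by (subst real_div_sqrt) simp_all
    finally show ?thesis .
  qed
  ultimately show ?thesis
    using assms(1) by (simp add: Rpoly_multilinear_coeffs expectation_coordinate_family)
qed

lemma U_ge_three_point:
  assumes "d \<ge> 1" "d \<le> n" and tail: "\<And>y. 0 \<le> y \<Longrightarrow> y < t \<Longrightarrow> p \<le> tail_bound q y"
    and x: "x < sqrt (n choose d) * t ^ d"
  shows "p ^ (n * d) \<le> U d q x"
proof -
  let ?M = "three_point_model n d t p"
  let ?R = "Rpoly ?M d n (multilinear_coeffs n d) (coordinate_family n d)"
  let ?E = "Pi (prod_encode ` ({1..n} \<times> {1..d})) (\<lambda>_. {t})"
  have "?E \<subseteq> {w \<in> space ?M. ?R w > x}"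
    using x Rpoly_three_point_model_all_t[OF assms(1)] by auto
  then have "p ^ (n * d) \<le> measure ?M {w \<in> space ?M. ?R w > x}"
    unfolding prob_three_point_model_all_t[symmetric] by (rule measure_pmf.finite_measure_mono) simp
  also have "\<dots> \<le> Tfun ?M ?R x"
    by (simp add: Tfun_def)
  also have "\<dots> \<le> U d q x"
    by (rule Tfun_le_U[OF admissible_three_point_model[OF assms(1,2) tail]])
  finally show ?thesis .
qed

end

section \<open>Choice of the parameters\<close>

lemma exp_minus_le_half:
  fixes a :: real
  assumes "a \<ge> 1"
  shows "exp (- a) \<le> 1 / 2"
proof -
  have "2 \<le> exp (1 :: real)" using exp_ge_add_one_self[of 1] by simp
  then have "exp (- 1) \<le> (1 / 2 :: real)" by (simp add: exp_minus field_simps)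
  moreover have "exp (- a) \<le> exp (- 1)" using assms by simp
  ultimately show ?thesis by linarith
qed

lemma tail_bound_ge_exp_minus_one:
  assumes "0 < q" "0 \<le> y" "y < 1"
  shows "exp (- 1) \<le> tail_bound q y"
proof (cases q)
  case (real r)
  with assms have "y powr r \<le> 1 powr r" by (intro powr_mono2) auto
  with real show ?thesis by (simp add: tail_bound_def)
qed (use assms in \<open>auto simp: tail_bound_def\<close>)

lemma U_ge_exp_x_powr_r_over_d:
  fixes r x :: real
  assumes "d \<ge> 1" "0 < r" "x \<ge> 1"
  shows "exp (- (real d ^ 2 * (2 powr (r / d) + 1)) * x powr (r / d)) \<le> U d (ereal r) x"
proof -
  define t where "t = (2 * x) powr (1 / d)"
  define p where "p = exp (- (t powr r + 1))"
  have "t > 0" using assms unfolding t_def by simp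
  have "t ^ d = (2 * x) powr (1 / d * d)"
    using \<open>t > 0\<close> by (subst powr_realpow[symmetric]) (simp_all add: t_def powr_powr)
  then have "t ^ d = 2 * x" using assms by simp
  have t_powr: "t powr r = 2 powr (r / d) * x powr (r / d)"
    using assms by (simp add: t_def powr_powr powr_mult)
  have "p ^ (d * d) \<le> U d (ereal r) x"
  proof (rule U_ge_three_point)
    show "0 < t" "d \<ge> 1" "d \<le> d" using \<open>t > 0\<close> assms by simp_all
    show "0 \<le> p" by (simp add: p_def)
    show "p \<le> 1 / 2" unfolding p_def by (rule exp_minus_le_half) simp
    show "x < sqrt (d choose d) * t ^ d" using \<open>t ^ d = 2 * x\<close> assms by simp
    fix y :: real assume "0 \<le> y" "y < t"
    then have "y powr r \<le> t powr r" using assms by (intro powr_mono2) auto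
    then show "p \<le> tail_bound (ereal r) y" by (simp add: p_def tail_bound_def)
  qed
  moreover have "p ^ (d * d) = exp (- (real d ^ 2 * (t powr r + 1)))"
    unfolding p_def exp_of_nat_mult[symmetric] by (simp add: power2_eq_square ring_distribs)
  moreover have "t powr r + 1 \<le> (2 powr (r / d) + 1) * x powr (r / d)"
    using assms by (simp add: t_powr distrib_right ge_one_powr_ge_zero)
  then have "exp (- (real d ^ 2 * (2 powr (r / d) + 1)) * x powr (r / d))
      \<le> exp (- (real d ^ 2 * (t powr r + 1)))"
    by (simp add: mult_left_mono mult.assoc)
  ultimately show ?thesis by linarith
qed

lemma U_ge_exp_x_powr_2_over_d:
  fixes x :: real
  assumes "d \<ge> 1" "0 < q" "x \<ge> 1"
  shows "exp (- (4 * real d ^ 2) * x powr (2 / d)) \<le> U d q x"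
proof -
  define m where "m = nat \<lfloor>x powr (2 / d)\<rfloor> + 1"
  define n where "n = d * m"
  define p :: real where "p = exp (- 2)"
  have x_powr: "x powr (2 / d) \<ge> 1" using assms by (simp add: ge_one_powr_ge_zero)
  have m_gt: "real m > x powr (2 / d)" and m_le: "real m \<le> 2 * x powr (2 / d)"
    using x_powr by (simp_all add: m_def) linarith+
  have "p ^ (n * d) \<le> U d q x"
  proof (rule U_ge_three_point)
    show "0 < (1 :: real)" "d \<ge> 1" using assms by simp_all
    show "d \<le> n" unfolding n_def m_def by simp
    show "0 \<le> p" by (simp add: p_def)
    show "p \<le> 1 / 2" unfolding p_def by (rule exp_minus_le_half) simp
    fix y :: real assume "0 \<le> y" "y < 1"
    then have "exp (- 1) \<le> tail_bound q y"
      by (rule tail_bound_ge_exp_minus_one[OF assms(2)])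
    moreover have "p \<le> exp (- 1)" by (simp add: p_def)
    ultimately show "p \<le> tail_bound q y" by linarith
  next
    have "x\<^sup>2 = x powr (2 / d * d)"
      using assms by (simp add: powr_numeral)
    also have "\<dots> = (x powr (2 / d)) ^ d"
      using assms by (subst powr_realpow[symmetric]) (simp_all add: powr_powr)
    also have "\<dots> < real m ^ d"
      using x_powr m_gt assms by (intro power_strict_mono) auto
    also have "\<dots> = (real n / real d) ^ d" using assms by (simp add: n_def)
    also have "\<dots> \<le> real (n choose d)"
      by (rule binomial_ge_n_over_k_pow_k) (simp add: n_def m_def)
    finally show "x < sqrt (n choose d) * 1 ^ d" by (simp add: real_less_rsqrt)
  qed
  moreover have "p ^ (n * d) = exp (- (2 * real d ^ 2 * real m))"
    unfolding p_def exp_of_nat_mult[symmetric] by (simp add: n_def power2_eq_square)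
  moreover have "2 * real d ^ 2 * real m \<le> 4 * real d ^ 2 * x powr (2 / d)"
    using mult_left_mono[OF m_le, of "2 * real d ^ 2"] by (simp add: algebra_simps)
  then have "exp (- (4 * real d ^ 2) * x powr (2 / d)) \<le> exp (- (2 * real d ^ 2 * real m))"
    by simp
  ultimately show ?thesis by linarith
qed

theorem theorem3:
  fixes d :: nat and q :: ereal
  assumes "d \<ge> 1" and "0 < q"
  shows "\<exists>C4>0. \<forall>x\<ge>1. U d q x \<ge> exp (- C4 * x powr (real_of_ereal (min q 2) / real d))"
proof (cases "q \<le> 2")
  case True
  with assms(2) obtain r where q: "q = ereal r" and "0 < r"
    by (cases q) auto
  with True have "real_of_ereal (min q 2) = r" by simp
  with q show ?thesis
    using U_ge_exp_x_powr_r_over_d[OF assms(1) \<open>0 < r\<close>] assms(1)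
    by (intro exI[of _ "real d ^ 2 * (2 powr (r / d) + 1)"]) (auto simp: add_pos_nonneg)
next
  case False
  then have "real_of_ereal (min q 2) = 2" by (simp add: min_def)
  then show ?thesis
    using U_ge_exp_x_powr_2_over_d[OF assms] assms(1)
    by (intro exI[of _ "4 * real d ^ 2"]) auto
qed

end
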